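(* Let $\mathcal{H}\subseteq\mathcal{Y}^{\mathcal{X}}$ be a hypothesis class and let $\mathcal{A}^{\mathrm{opt}}$ be the oracle learning algorithm with respect to $\mathcal{H}$. Assume that no two distinct groups share an oracle classifier, i.e. for $k\neq k'$ there is no $h\in\mathcal{H}$ that minimizes the expected 0-1 loss under both $D_k$ and $D_{k'}$. Assume that at each population state $\mathbf{p}$ the oracle classifier $h_{\mathbf{p}}\sim\mathcal{A}^{\mathrm{opt}}(D_{\mathbf{p}})$ is deployed, so that the evolutionary prediction game is $F_k(\mathbf{p})=\mathrm{acc}_k(h_{\mathbf{p}})$, and that $\mathbf{p}$ evolves according to population dynamics $\dot{\mathbf{p}}=V_F(\mathbf{p})$ as described in the context. Then: (1) Accuracy: overall accuracy is non-decreasing along trajectories, $\frac{d}{dt}\mathrm{acc}_{\mathbf{p}}(h_{\mathbf{p}})\ge 0$. (2) Stability: a stable equilibrium always exists, and there can be multiple such equilibria. (3) Competitive exclusion: every stable equilibrium $\mathbf{p}^*$ satisfies $|\mathrm{supp}(\mathbf{p}^* )|=1$. (4) Coexistence: equilibria with $|\mathrm{supp}(\mathbf{p}^* )|\ge 2$ may exist, but any such equilibrium is unstable.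
   Context: Setting: $\mathcal{X}$ is a feature space and $\mathcal{Y}$ a label set. There are $K$ groups; group $k\in[K]$ has a fixed distribution $D_k$ over $\mathcal{X}\times\mathcal{Y}$. A population state is $\mathbf{p}\in\Delta^K=\{\mathbf{p}\in\mathbb{R}^K:p_k\ge0,\sum_kp_k=1\}$, with mixture $D_{\mathbf{p}}=\sum_kp_kD_k$ and $\mathrm{supp}(\mathbf{p})=\{k:p_k>0\}$. For a classifier $h$, $\mathrm{acc}_D(h)=\Pr_{(x,y)\sim D}[h(x)=y]$, $\mathrm{acc}_k(h)=\mathrm{acc}_{D_k}(h)$, $\mathrm{acc}_{\mathbf{p}}(h)=\mathrm{acc}_{D_{\mathbf{p}}}(h)$. A learning algorithm $\mathcal{A}$ maps a distribution to a (possibly random) classifier; the evolutionary prediction game it induces is $F:\Delta^K\to\mathbb{R}^K$, $F_k(\mathbf{p})=\mathbb{E}_{h\sim\mathcal{A}(D_{\mathbf{p}})}[\mathrm{acc}_k(h)]$. A Nash equilibrium is $\mathbf{p}^*$ with $\mathrm{supp}(\mathbf{p}^* )\subseteq\arg\max_kF_k(\mathbf{p}^* )$; an equilibrium is called a coexistence equilibrium if $|\mathrm{supp}(\mathbf{p}^* )|\ge2$. Dynamics: $\dot{\mathbf{p}}=V_F(\mathbf{p})$ where $V_F:\Delta^K\to T\Delta^K=\{z\in\mathbb{R}^K:\sum_kz_k=0\}$ is continuous, satisfies positive correlation ($V_F(\mathbf{p})\cdot F(\mathbf{p})>0$ whenever $V_F(\mathbf{p})\ne0$), and either satisfies Nash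 stationarity (rest points are exactly the Nash equilibria of $F$) or is an imitative dynamic (e.g. the replicator dynamics $\dot p_k=p_k(F_k(\mathbf{p})-\sum_jp_jF_j(\mathbf{p}))$). An equilibrium is (evolutionarily) stable if it attracts all nearby population states under such dynamics, and unstable otherwise. Oracle algorithm: $\mathcal{A}^{\mathrm{opt}}(D)$ returns $h\in\arg\min_{h\in\mathcal{H}}\mathbb{E}_{(x,y)\sim D}[\mathbf{1}\{h(x)\ne y\}]$, assumed to exist, with ties broken consistently so that the fitness functions are continuous in $\mathbf{p}$. *)

theory Defs
  imports "HOL-Probability.Probability"
begin

text \<open>Groups are indexed by a finite type 'k (so K = CARD('k)); a population
 state is a vector in real ^ 'k lying in the probability simplex.\<close>

definition pop_simplex :: "(real ^ 'k::finite) set" where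
  "pop_simplex = {p. (\<forall>k. 0 \<le> p $ k) \<and> (\<Sum>k\<in>UNIV. p $ k) = 1}"

definition pop_supp :: "real ^ 'k::finite \<Rightarrow> 'k set" where
  "pop_supp p = {k. 0 < p $ k}"

definition acc :: "('x \<times> 'y) measure \<Rightarrow> ('x \<Rightarrow> 'y) \<Rightarrow> real" where
  "acc D h = measure D {z \<in> space D. h (fst z) = snd z}"

definition err :: "('x \<times> 'y) measure \<Rightarrow> ('x \<Rightarrow> 'y) \<Rightarrow> real" where
  "err D h = measure D {z \<in> space D. h (fst z) \<noteq> snd z}"

text \<open>Accuracy / expected 0-1 loss under the mixture D_p = sum_k p_k D_k
 (written out by linearity of the integral).\<close>

definition mix_acc :: "('k::finite \<Rightarrow> ('x \<times> 'y) measure) \<Rightarrow> real ^ 'k \<Rightarrow> ('x \<Rightarrow> 'y) \<Rightarrow> real" where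
  "mix_acc D p h = (\<Sum>k\<in>UNIV. p $ k * acc (D k) h)"

definition mix_err :: "('k::finite \<Rightarrow> ('x \<times> 'y) measure) \<Rightarrow> real ^ 'k \<Rightarrow> ('x \<Rightarrow> 'y) \<Rightarrow> real" where
  "mix_err D p h = (\<Sum>k\<in>UNIV. p $ k * err (D k) h)"

definition oracle_set :: "('x \<Rightarrow> 'y) set \<Rightarrow> ('x \<times> 'y) measure \<Rightarrow> ('x \<Rightarrow> 'y) set" where
  "oracle_set H D = {h \<in> H. \<forall>h'\<in>H. err D h \<le> err D h'}"

text \<open>The deployed (deterministic, consistently tie-broken) oracle classifier
 h_p = sel p must minimise the 0-1 loss under D_p for every state p.\<close>

definition oracle_selection ::
  "('k::finite \<Rightarrow> ('x \<times> 'y) measure) \<Rightarrow> ('x \<Rightarrow> 'y) set \<Rightarrow> (real ^ 'k \<Rightarrow> ('x \<Rightarrow> 'y)) \<Rightarrow> bool" where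
  "oracle_selection D H sel \<longleftrightarrow>
     (\<forall>p\<in>pop_simplex. sel p \<in> H \<and> (\<forall>h\<in>H. mix_err D p (sel p) \<le> mix_err D p h))"

definition fitness ::
  "('k::finite \<Rightarrow> ('x \<times> 'y) measure) \<Rightarrow> (real ^ 'k \<Rightarrow> ('x \<Rightarrow> 'y)) \<Rightarrow> real ^ 'k \<Rightarrow> real ^ 'k" where
  "fitness D sel p = (\<chi> k. acc (D k) (sel p))"

definition no_shared_oracle :: "('k \<Rightarrow> ('x \<times> 'y) measure) \<Rightarrow> ('x \<Rightarrow> 'y) set \<Rightarrow> bool" where
  "no_shared_oracle D H \<longleftrightarrow>
     (\<forall>k k'. k \<noteq> k' \<longrightarrow> \<not> (\<exists>h. h \<in> oracle_set H (D k) \<and> h \<in> oracle_set H (D k')))"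

definition oracle_game ::
  "('k::finite \<Rightarrow> ('x \<times> 'y) measure) \<Rightarrow> ('x \<Rightarrow> 'y) set \<Rightarrow> (real ^ 'k \<Rightarrow> ('x \<Rightarrow> 'y)) \<Rightarrow> bool" where
  "oracle_game D H sel \<longleftrightarrow>
     (\<forall>k. prob_space (D k)) \<and>
     (\<forall>k. \<forall>h\<in>H. {z \<in> space (D k). h (fst z) = snd z} \<in> sets (D k)) \<and>
     no_shared_oracle D H \<and>
     oracle_selection D H sel \<and>
     continuous_on pop_simplex (fitness D sel)"

definition nash_eq :: "(real ^ 'k::finite \<Rightarrow> real ^ 'k) \<Rightarrow> real ^ 'k \<Rightarrow> bool" where
  "nash_eq F p \<longleftrightarrow> p \<in> pop_simplex \<and> (\<forall>k\<in>pop_supp p. \<forall>j. F p $ j \<le> F p $ k)"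

definition nash_stationary :: "(real ^ 'k::finite \<Rightarrow> real ^ 'k) \<Rightarrow> (real ^ 'k \<Rightarrow> real ^ 'k) \<Rightarrow> bool" where
  "nash_stationary F V \<longleftrightarrow> (\<forall>p\<in>pop_simplex. V p = 0 \<longleftrightarrow> nash_eq F p)"

text \<open>The replicator dynamics is the case
 G_k(p) = F_k(p) - sum_j p_j F_j(p).\<close>

definition imitative :: "(real ^ 'k::finite \<Rightarrow> real ^ 'k) \<Rightarrow> (real ^ 'k \<Rightarrow> real ^ 'k) \<Rightarrow> bool" where
  "imitative F V \<longleftrightarrow>
     (\<exists>G :: real ^ 'k \<Rightarrow> real ^ 'k. continuous_on pop_simplex G \<and>
        (\<forall>p\<in>pop_simplex. \<forall>k. V p $ k = p $ k * G p $ k) \<and>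
        (\<forall>p\<in>pop_simplex. \<forall>i j. G p $ i \<le> G p $ j \<longleftrightarrow> F p $ i \<le> F p $ j))"

definition dyn_solution :: "(real ^ 'k::finite \<Rightarrow> real ^ 'k) \<Rightarrow> (real \<Rightarrow> real ^ 'k) \<Rightarrow> bool" where
  "dyn_solution V x \<longleftrightarrow>
     (\<forall>t\<ge>0. x t \<in> pop_simplex) \<and>
     (\<forall>t\<ge>0. (x has_vector_derivative V (x t)) (at t within {0..}))"

definition admissible_dynamics :: "(real ^ 'k::finite \<Rightarrow> real ^ 'k) \<Rightarrow> (real ^ 'k \<Rightarrow> real ^ 'k) \<Rightarrow> bool" where
  "admissible_dynamics F V \<longleftrightarrow>
     continuous_on pop_simplex V \<and>
     (\<forall>p\<in>pop_simplex. (\<Sum>k\<in>UNIV. V p $ k) = 0) \<and>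
     (\<forall>p\<in>pop_simplex. V p \<noteq> 0 \<longrightarrow> V p \<bullet> F p > 0) \<and>
     (nash_stationary F V \<or> imitative F V) \<and>
     (\<forall>x0\<in>pop_simplex. \<exists>x. dyn_solution V x \<and> x 0 = x0)"

definition stable_eq :: "(real ^ 'k::finite \<Rightarrow> real ^ 'k) \<Rightarrow> (real ^ 'k \<Rightarrow> real ^ 'k) \<Rightarrow> real ^ 'k \<Rightarrow> bool" where
  "stable_eq F V q \<longleftrightarrow> nash_eq F q \<and>
     (\<exists>\<epsilon>>0. \<forall>x. dyn_solution V x \<and> dist (x 0) q < \<epsilon> \<longrightarrow> (x \<longlongrightarrow> q) at_top)"

end

theory Submission
  imports Defs
begin

text \<open>
  Deploying the oracle classifier makes overall accuracy a potential for the game. Write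
  \<open>\<Phi>(p) = p \<bullet> F(p)\<close>, the accuracy of \<open>h\<^sub>p\<close> on \<open>D\<^sub>p\<close>. As \<open>h\<^sub>p\<close> is optimal for \<open>D\<^sub>p\<close>,
  \<open>p \<bullet> F(p') \<le> \<Phi>(p)\<close> for all \<open>p'\<close>: \<open>\<Phi>\<close> is the upper envelope of the linear functions
  \<open>p \<mapsto> p \<bullet> F(p')\<close>. Along a trajectory the difference quotients of \<open>\<Phi>\<close> are therefore squeezed
  between those of two such linear functions, so \<open>\<Phi>\<close> has derivative \<open>V \<bullet> F \<ge> 0\<close> by positive
  correlation, and accuracy never decreases.

  At a coexistence equilibrium \<open>q\<close> the groups in the support have equal fitness, so moving mass
  between two of them keeps \<open>p \<bullet> F(q) = \<Phi>(q)\<close> and cannot decrease \<open>\<Phi>\<close>. If \<open>q\<close> were stable it would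
  be a local maximum of \<open>\<Phi>\<close>; then so would the shifted state, which makes it a Nash equilibrium
  and hence a rest point next to \<open>q\<close>, contradicting attraction.

  A stable equilibrium is the vertex \<open>e\<^sub>k\<close> of the group with the largest own-oracle accuracy
  \<open>F(e\<^sub>k)\<^sub>k\<close>. As no classifier is an oracle for two groups, group \<open>k\<close> is strictly fittest near
  \<open>e\<^sub>k\<close>, which has no other rest points nearby, and \<open>\<Phi> < \<Phi>(e\<^sub>k)\<close> on every compact slab
  \<open>0 < lo \<le> p\<^sub>k \<le> hi < 1\<close>. A trajectory starting near \<open>e\<^sub>k\<close> has \<open>\<Phi>\<close> above its maximum on such a slab,
  so it can never cross the slab, and it is driven to \<open>e\<^sub>k\<close> because \<open>\<Phi>\<close> grows at a rate bounded
  away from zero on compact sets without rest points.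

  In the two-group example the group accuracies of the classifiers range over the unit quarter
  circle, the oracle at \<open>p\<close> has accuracies \<open>p / \<bar>p\<bar>\<close>, both vertices are stable and \<open>(1/2, 1/2)\<close> is a
  coexistence equilibrium.
\<close>

lemma simplex_nonneg: "p \<in> pop_simplex \<Longrightarrow> 0 \<le> p $ j"
  by (simp add: pop_simplex_def)

lemma simplex_sum: "p \<in> pop_simplex \<Longrightarrow> (\<Sum>j\<in>UNIV. p $ j) = 1"
  by (simp add: pop_simplex_def)

lemma simplex_le_1:
  assumes "p \<in> pop_simplex"
  shows "p $ j \<le> 1"
proof -
  have "p $ j \<le> (\<Sum>i\<in>UNIV. p $ i)"
    by (rule member_le_sum) (auto simp: simplex_nonneg[OF assms])
  then show ?thesis
    using simplex_sum[OF assms] by simp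
qed

lemma simplex_nonzero: "p \<in> pop_simplex \<Longrightarrow> p \<noteq> 0"
  using simplex_sum[of p] by auto

lemma axis_in_simplex: "axis k 1 \<in> pop_simplex"
  by (simp add: pop_simplex_def axis_def)

lemma pop_supp_axis: "pop_supp (axis k 1) = {k}"
  by (auto simp: pop_supp_def axis_def)

lemma pop_supp_nonempty:
  assumes "p \<in> pop_simplex"
  shows "pop_supp p \<noteq> {}"
proof
  assume "pop_supp p = {}"
  then have "p $ j \<le> 0" for j
    by (auto simp: pop_supp_def not_less[symmetric])
  then have "(\<Sum>j\<in>UNIV. p $ j) \<le> 0"
    by (simp add: sum_nonpos)
  then show False
    using simplex_sum[OF assms] by simp
qed

lemma simplex_other_coordinate_pos:
  assumes p: "p \<in> pop_simplex" and "p $ k < 1"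
  shows "\<exists>j. j \<noteq> k \<and> 0 < p $ j"
proof (rule ccontr)
  assume "\<not> ?thesis"
  then have "p $ j = 0" if "j \<noteq> k" for j
    using simplex_nonneg[OF p, of j] that by (auto simp: le_less)
  then have "(\<Sum>j\<in>UNIV. p $ j) = (\<Sum>j\<in>UNIV. if j = k then p $ k else 0)"
    by (intro sum.cong) auto
  then show False
    using simplex_sum[OF p] \<open>p $ k < 1\<close> by simp
qed

lemma dist_axis_le:
  assumes p: "p \<in> pop_simplex"
  shows "dist p (axis k 1) \<le> 2 * (1 - p $ k)"
proof -
  have "dist p (axis k 1) \<le> (\<Sum>j\<in>UNIV. \<bar>(p - axis k 1) $ j\<bar>)"
    unfolding dist_norm by (rule norm_le_l1_cart)
  also have "\<dots> = (\<Sum>j\<in>UNIV. p $ j + (if j = k then 1 - 2 * p $ k else 0))"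
    using simplex_nonneg[OF p] simplex_le_1[OF p] by (intro sum.cong) (auto simp: axis_def)
  also have "\<dots> = 2 * (1 - p $ k)"
    by (simp add: sum.distrib simplex_sum[OF p])
  finally show ?thesis .
qed

lemma compact_pop_simplex: "compact (pop_simplex :: (real ^ 'k::finite) set)"
proof (rule compact_eq_bounded_closed[THEN iffD2], rule conjI)
  have "norm p \<le> 1" if p: "p \<in> pop_simplex" for p :: "real ^ 'k"
  proof -
    have "norm p \<le> (\<Sum>j\<in>UNIV. \<bar>p $ j\<bar>)"
      by (rule norm_le_l1_cart)
    also have "\<dots> = 1"
      using simplex_sum[OF p] simplex_nonneg[OF p] by simp
    finally show ?thesis .
  qed
  then show "bounded (pop_simplex :: (real ^ 'k) set)"
    unfolding bounded_iff by blast
  have "pop_simplex = (\<Inter>j. {p :: real ^ 'k. 0 \<le> p $ j}) \<inter> {p. (\<Sum>j\<in>UNIV. p $ j) = 1}"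
    by (auto simp: pop_simplex_def)
  also have "closed \<dots>"
    by (intro closed_Int closed_INT ballI closed_Collect_le closed_Collect_eq continuous_intros)
  finally show "closed (pop_simplex :: (real ^ 'k) set)" .
qed

lemma tendsto_axis_if_coordinate_near_1:
  assumes in_simplex: "\<forall>\<^sub>F t in F. x t \<in> pop_simplex"
    and near: "\<And>\<delta>. 0 < \<delta> \<Longrightarrow> \<forall>\<^sub>F t in F. 1 - \<delta> < x t $ k"
  shows "(x \<longlongrightarrow> axis k 1) F"
proof (rule tendstoI)
  fix e :: real
  assume "0 < e"
  have "\<forall>\<^sub>F t in F. 1 - e / 2 < x t $ k"
    using near \<open>0 < e\<close> by simp
  with in_simplex show "\<forall>\<^sub>F t in F. dist (x t) (axis k 1) < e"
  proof eventually_elim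
    case (elim t)
    then show ?case
      using dist_axis_le[of "x t" k] by simp
  qed
qed

definition simplex_slab :: "'k \<Rightarrow> real \<Rightarrow> real \<Rightarrow> (real ^ 'k::finite) set" where
  "simplex_slab k lo hi = {p \<in> pop_simplex. lo \<le> p $ k \<and> p $ k \<le> hi}"

lemma compact_simplex_slab: "compact (simplex_slab k lo hi)"
proof -
  have "simplex_slab k lo hi = pop_simplex \<inter> ({p. lo \<le> p $ k} \<inter> {p. p $ k \<le> hi})"
    by (auto simp: simplex_slab_def)
  also have "compact \<dots>"
    by (intro compact_Int_closed compact_pop_simplex closed_Int closed_Collect_le continuous_intros)
  finally show ?thesis .
qed

lemma move_mass_in_simplex:
  assumes p: "p \<in> pop_simplex" and u: "0 \<le> u" "u \<le> p $ j"
  shows "p + u *\<^sub>R (axis i 1 - axis j 1) \<in> pop_simplex"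
proof -
  have "0 \<le> (p + u *\<^sub>R (axis i 1 - axis j 1)) $ l" for l
    using simplex_nonneg[OF p, of l] u by (auto simp: axis_def)
  moreover have "(\<Sum>l\<in>UNIV. (p + u *\<^sub>R (axis i 1 - axis j 1)) $ l) =
      (\<Sum>l\<in>UNIV. p $ l) + u * ((\<Sum>l\<in>UNIV. axis i 1 $ l) - (\<Sum>l\<in>UNIV. axis j 1 $ l))"
    by (simp add: sum.distrib sum_subtractf sum_distrib_left algebra_simps)
  ultimately show ?thesis
    using p simplex_sum[OF axis_in_simplex[of i]] simplex_sum[OF axis_in_simplex[of j]]
    by (simp add: pop_simplex_def)
qed

lemma dist_move_mass_le:
  fixes p :: "real ^ 'k::finite"
  assumes "0 \<le> u"
  shows "dist (p + u *\<^sub>R (axis i 1 - axis j 1)) p \<le> 2 * u"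
proof -
  have "norm (axis i 1 - axis j 1 :: real ^ 'k) \<le> 2"
    using norm_triangle_ineq4[of "axis i (1::real)" "axis j 1"] by simp
  from mult_left_mono[OF this assms] show ?thesis
    using assms by (simp add: dist_norm mult.commute)
qed

lemma inner_move_mass:
  "(p + u *\<^sub>R (axis i 1 - axis j 1)) \<bullet> G = p \<bullet> G + u * (G $ i - G $ j)"
  by (simp add: inner_add_left inner_diff_left inner_axis')

lemma dyn_solution_in_simplex: "dyn_solution V x \<Longrightarrow> 0 \<le> t \<Longrightarrow> x t \<in> pop_simplex"
  by (simp add: dyn_solution_def)

lemma dyn_solution_continuous: "dyn_solution V x \<Longrightarrow> continuous_on {0..} x"
  unfolding dyn_solution_def
  by (auto simp: continuous_on_eq_continuous_within intro: has_vector_derivative_continuous)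

lemma dyn_solution_const: "p \<in> pop_simplex \<Longrightarrow> V p = 0 \<Longrightarrow> dyn_solution V (\<lambda>t. p)"
  by (simp add: dyn_solution_def)

lemma admissible_inner_pos:
  "admissible_dynamics F V \<Longrightarrow> p \<in> pop_simplex \<Longrightarrow> V p \<noteq> 0 \<Longrightarrow> 0 < V p \<bullet> F p"
  by (simp add: admissible_dynamics_def)

lemma admissible_inner_nonneg:
  "admissible_dynamics F V \<Longrightarrow> p \<in> pop_simplex \<Longrightarrow> 0 \<le> V p \<bullet> F p"
  using admissible_inner_pos[of F V p] by (cases "V p = 0") auto

lemma admissible_nash_rest_point:
  assumes adm: "admissible_dynamics F V" and ne: "nash_eq F p"
  shows "V p = 0"
proof -
  have p: "p \<in> pop_simplex"
    using ne by (simp add: nash_eq_def)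
  have "nash_stationary F V \<or> imitative F V"
    using adm by (simp add: admissible_dynamics_def)
  then show ?thesis
  proof
    assume "nash_stationary F V"
    then show ?thesis
      using p ne by (simp add: nash_stationary_def)
  next
    assume "imitative F V"
    then obtain G where V: "\<And>l. V p $ l = p $ l * G p $ l"
      and G: "\<And>i j. G p $ i \<le> G p $ j \<longleftrightarrow> F p $ i \<le> F p $ j"
      using p unfolding imitative_def by blast
    obtain i where i: "i \<in> pop_supp p"
      using pop_supp_nonempty[OF p] by blast
    \<comment> \<open>All groups in the support share the top fitness, hence the same growth rate.\<close>
    have V_eq: "V p $ l = p $ l * G p $ i" for l
    proof (cases "l \<in> pop_supp p")
      case True
      then have "F p $ l = F p $ i"
        using ne i by (meson nash_eq_def order_antisym)
      then show ?thesis
        using G[of l i] G[of i l] V[of l] by simp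
    next
      case False
      then show ?thesis
        using V[of l] simplex_nonneg[OF p, of l] by (simp add: pop_supp_def)
    qed
    have "0 = (\<Sum>l\<in>UNIV. V p $ l)"
      using adm p by (simp add: admissible_dynamics_def)
    also have "\<dots> = G p $ i"
      using simplex_sum[OF p] by (simp add: V_eq flip: sum_distrib_right)
    finally show ?thesis
      using V_eq by (simp add: vec_eq_iff)
  qed
qed

lemma admissible_rest_point_fitness_le:
  assumes adm: "admissible_dynamics F V" and p: "p \<in> pop_simplex" and V0: "V p = 0"
    and i: "i \<in> pop_supp p" and j: "j \<in> pop_supp p"
  shows "F p $ j \<le> F p $ i"
proof -
  have "nash_stationary F V \<or> imitative F V"
    using adm by (simp add: admissible_dynamics_def)
  then show ?thesis
  proof
    assume "nash_stationary F V"
    then have "nash_eq F p"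
      using p V0 by (simp add: nash_stationary_def)
    then show ?thesis
      using i by (simp add: nash_eq_def)
  next
    assume "imitative F V"
    then obtain G where V: "\<And>l. V p $ l = p $ l * G p $ l"
      and G: "\<And>i j. G p $ i \<le> G p $ j \<longleftrightarrow> F p $ i \<le> F p $ j"
      using p unfolding imitative_def by blast
    have "G p $ l = 0" if "l \<in> pop_supp p" for l
      using V[of l] V0 that by (simp add: pop_supp_def)
    then show ?thesis
      using G[of j i] i j by simp
  qed
qed

lemma stable_eq_isolated_rest_point:
  assumes "stable_eq F V q"
  shows "\<exists>\<epsilon>>0. \<forall>p\<in>pop_simplex. dist p q < \<epsilon> \<longrightarrow> V p = 0 \<longrightarrow> p = q"
proof -
  obtain \<epsilon> where \<epsilon>: "0 < \<epsilon>"
    and attract: "\<And>x. dyn_solution V x \<Longrightarrow> dist (x 0) q < \<epsilon> \<Longrightarrow> (x \<longlongrightarrow> q) at_top"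
    using assms unfolding stable_eq_def by blast
  have "p = q" if "p \<in> pop_simplex" "dist p q < \<epsilon>" "V p = 0" for p
    using attract[OF dyn_solution_const[of p V]] that
    by (simp add: tendsto_const_iff)
  then show ?thesis
    using \<epsilon> by blast
qed

section \<open>Games in which every state is self-optimal\<close>

lemma has_real_derivative_squeeze:
  fixes f a b :: "real \<Rightarrow> real"
  assumes bounds: "\<And>s. s \<in> S \<Longrightarrow> a s \<le> f s - f t \<and> f s - f t \<le> b s"
    and lim_a: "((\<lambda>s. a s / (s - t)) \<longlongrightarrow> L) (at t within S)"
    and lim_b: "((\<lambda>s. b s / (s - t)) \<longlongrightarrow> L) (at t within S)"
  shows "(f has_real_derivative L) (at t within S)"
proof -
  let ?lo = "\<lambda>s. min (a s / (s - t)) (b s / (s - t))"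
  let ?hi = "\<lambda>s. max (a s / (s - t)) (b s / (s - t))"
  have quotient_bounds: "?lo s \<le> (f s - f t) / (s - t) \<and> (f s - f t) / (s - t) \<le> ?hi s"
    if "s \<in> S" "s \<noteq> t" for s
  proof (cases "s < t")
    case True
    then show ?thesis
      using bounds[OF that(1)] by (auto simp: divide_right_mono_neg min_le_iff_disj le_max_iff_disj)
  next
    case False
    then show ?thesis
      using bounds[OF that(1)] that(2) by (auto simp: divide_right_mono min_le_iff_disj le_max_iff_disj)
  qed
  show ?thesis
    unfolding has_field_derivative_iff
  proof (rule tendsto_sandwich)
    show "\<forall>\<^sub>F s in at t within S. ?lo s \<le> (f s - f t) / (s - t)"
      "\<forall>\<^sub>F s in at t within S. (f s - f t) / (s - t) \<le> ?hi s"
      using quotient_bounds unfolding eventually_at_filter by (auto intro: always_eventually)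
    show "(?lo \<longlongrightarrow> L) (at t within S)" "(?hi \<longlongrightarrow> L) (at t within S)"
      using tendsto_min[OF lim_a lim_b] tendsto_max[OF lim_a lim_b] by simp_all
  qed
qed

lemma difference_quotient_inner_tendsto:
  fixes x G :: "real \<Rightarrow> real ^ 'k::finite"
  assumes dx: "(x has_vector_derivative v) (at t within S)" and G: "(G \<longlongrightarrow> g) (at t within S)"
  shows "((\<lambda>s. ((x s - x t) \<bullet> G s) / (s - t)) \<longlongrightarrow> v \<bullet> g) (at t within S)"
proof -
  have "((\<lambda>s. (x s $ j - x t $ j) / (s - t)) \<longlongrightarrow> v $ j) (at t within S)" for j
  proof -
    have "((\<lambda>s. x s $ j) has_real_derivative v $ j) (at t within S)"
      unfolding has_real_derivative_iff_has_vector_derivative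
      by (rule bounded_linear.has_vector_derivative[OF bounded_linear_vec_nth dx])
    then show ?thesis
      by (simp add: has_field_derivative_iff)
  qed
  then have "((\<lambda>s. \<Sum>j\<in>UNIV. (x s $ j - x t $ j) / (s - t) * G s $ j) \<longlongrightarrow> v \<bullet> g) (at t within S)"
    unfolding inner_vec_def inner_real_def by (intro tendsto_sum tendsto_mult tendsto_vec_nth G)
  then show ?thesis
    by (simp add: inner_vec_def sum_divide_distrib)
qed

locale self_optimal_game =
  fixes F V :: "real ^ 'k::finite \<Rightarrow> real ^ 'k"
  assumes fitness_continuous: "continuous_on pop_simplex F"
    and self_optimal: "p \<in> pop_simplex \<Longrightarrow> p' \<in> pop_simplex \<Longrightarrow> p \<bullet> F p' \<le> p \<bullet> F p"
    and admissible: "admissible_dynamics F V"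
begin

definition mean_fitness :: "real ^ 'k \<Rightarrow> real" where
  "mean_fitness p = p \<bullet> F p"

lemma mean_fitness_continuous: "continuous_on pop_simplex mean_fitness"
  unfolding mean_fitness_def by (intro continuous_intros fitness_continuous)

lemma mean_fitness_axis: "mean_fitness (axis k 1) = F (axis k 1) $ k"
  by (simp add: mean_fitness_def inner_axis')

lemma fitness_le_axis: "p \<in> pop_simplex \<Longrightarrow> F p $ k \<le> F (axis k 1) $ k"
  using self_optimal[OF axis_in_simplex, of p k] by (simp add: inner_axis')

lemma mean_fitness_has_derivative:
  assumes sol: "dyn_solution V x" and t: "0 \<le> t"
  shows "((\<lambda>s. mean_fitness (x s)) has_real_derivative V (x t) \<bullet> F (x t)) (at t within {0..})"
proof -
  have xS: "\<And>s. 0 \<le> s \<Longrightarrow> x s \<in> pop_simplex"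
    using dyn_solution_in_simplex[OF sol] .
  have dx: "(x has_vector_derivative V (x t)) (at t within {0..})"
    using sol t by (simp add: dyn_solution_def)
  have "continuous_on {0..} (F \<circ> x)"
    by (rule continuous_on_compose[OF dyn_solution_continuous[OF sol]
          continuous_on_subset[OF fitness_continuous]]) (auto simp: xS)
  then have "((\<lambda>s. F (x s)) \<longlongrightarrow> F (x t)) (at t within {0..})"
    using t by (simp add: continuous_on_def)
  note lim_upper = difference_quotient_inner_tendsto[OF dx this]
  note lim_lower = difference_quotient_inner_tendsto[OF dx tendsto_const]
  have "(x s - x t) \<bullet> F (x t) \<le> mean_fitness (x s) - mean_fitness (x t)
      \<and> mean_fitness (x s) - mean_fitness (x t) \<le> (x s - x t) \<bullet> F (x s)" if "s \<in> {0..}" for s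
    using self_optimal[OF xS[of s] xS[OF t]] self_optimal[OF xS[OF t] xS[of s]] that
    by (simp add: mean_fitness_def inner_diff_left)
  then show ?thesis
    by (rule has_real_derivative_squeeze[OF _ lim_lower lim_upper])
qed

lemma mean_fitness_increase:
  assumes sol: "dyn_solution V x" and ab: "0 \<le> a" "a \<le> b"
    and rate: "\<And>s. a < s \<Longrightarrow> s < b \<Longrightarrow> c \<le> V (x s) \<bullet> F (x s)"
  shows "c * (b - a) \<le> mean_fitness (x b) - mean_fitness (x a)"
proof (cases "a = b")
  case False
  then have "a < b"
    using ab by simp
  have deriv: "((\<lambda>s. mean_fitness (x s)) has_real_derivative V (x s) \<bullet> F (x s)) (at s)"
    if "0 < s" for s
    using mean_fitness_has_derivative[OF sol, of s] that
    by (simp add: at_within_interior[of s "{0..}"])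
  have "continuous_on {a..b} (\<lambda>s. mean_fitness (x s))"
    using ab by (intro continuous_on_compose2[OF mean_fitness_continuous]
        continuous_on_subset[OF dyn_solution_continuous[OF sol]])
      (auto intro: dyn_solution_in_simplex[OF sol])
  moreover have "(\<lambda>s. mean_fitness (x s)) differentiable (at s)" if "a < s" "s < b" for s
    using deriv[of s] that ab real_differentiable_def by force
  ultimately obtain l s where s: "a < s" "s < b"
    and l: "((\<lambda>s. mean_fitness (x s)) has_real_derivative l) (at s)"
    and mvt: "mean_fitness (x b) - mean_fitness (x a) = (b - a) * l"
    using MVT[OF \<open>a < b\<close>] by blast
  have "l = V (x s) \<bullet> F (x s)"
    using DERIV_unique[OF l deriv] s ab by simp
  then show ?thesis
    using mvt rate[OF s] \<open>a < b\<close> by (simp add: mult.commute mult_left_mono)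
qed simp

lemma mean_fitness_mono:
  assumes sol: "dyn_solution V x"
  shows "mono_on {0..} (\<lambda>t. mean_fitness (x t))"
proof (rule mono_onI)
  fix a b :: real
  assume "a \<in> {0..}" "b \<in> {0..}" "a \<le> b"
  then show "mean_fitness (x a) \<le> mean_fitness (x b)"
    using mean_fitness_increase[OF sol, of a b 0] dyn_solution_in_simplex[OF sol]
      admissible_inner_nonneg[OF admissible] by force
qed

lemma dyn_solution_leaves_rest_free_compact:
  assumes sol: "dyn_solution V x" and C: "compact C" "C \<subseteq> pop_simplex"
    and no_rest: "\<And>p. p \<in> C \<Longrightarrow> V p \<noteq> 0"
  shows "\<exists>t\<ge>0. x t \<notin> C"
proof (rule ccontr)
  assume "\<not> ?thesis"
  then have in_C: "\<And>t. 0 \<le> t \<Longrightarrow> x t \<in> C"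
    by auto
  have "continuous_on pop_simplex V"
    using admissible by (simp add: admissible_dynamics_def)
  then have "continuous_on pop_simplex (\<lambda>p. V p \<bullet> F p)"
    by (intro continuous_intros fitness_continuous)
  then obtain p0 where "p0 \<in> C" and p0: "\<And>p. p \<in> C \<Longrightarrow> V p0 \<bullet> F p0 \<le> V p \<bullet> F p"
    using continuous_attains_inf[OF C(1) _ continuous_on_subset[OF _ C(2)]] in_C[of 0] by blast
  define c where "c = V p0 \<bullet> F p0"
  have "0 < c"
    using admissible_inner_pos[OF admissible] no_rest \<open>p0 \<in> C\<close> C(2) by (auto simp: c_def)
  obtain q where q: "\<And>p. p \<in> pop_simplex \<Longrightarrow> mean_fitness p \<le> mean_fitness q"
    using continuous_attains_sup[OF compact_pop_simplex _ mean_fitness_continuous] axis_in_simplex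
    by blast
  have bounded: "\<And>t. 0 \<le> t \<Longrightarrow> mean_fitness (x t) \<le> mean_fitness q"
    using q C(2) in_C by blast
  \<comment> \<open>The mean fitness grows at rate at least c forever, but it is bounded.\<close>
  define T where "T = (mean_fitness q - mean_fitness (x 0) + 1) / c"
  have "0 \<le> T"
    using bounded[of 0] \<open>0 < c\<close> by (simp add: T_def)
  have "c * (T - 0) \<le> mean_fitness (x T) - mean_fitness (x 0)"
    by (rule mean_fitness_increase[OF sol order_refl \<open>0 \<le> T\<close>]) (use in_C p0 in \<open>auto simp: c_def\<close>)
  then show False
    using bounded[OF \<open>0 \<le> T\<close>] \<open>0 < c\<close> by (simp add: T_def)
qed

lemma mean_fitness_trap:
  assumes sol: "dyn_solution V x" and "lo \<le> hi"
    and bound: "\<And>p. p \<in> simplex_slab k lo hi \<Longrightarrow> mean_fitness p \<le> m"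
    and start: "m < mean_fitness (x 0)" "hi \<le> x 0 $ k"
    and t: "0 \<le> t"
  shows "hi < x t $ k"
proof (rule ccontr)
  assume "\<not> hi < x t $ k"
  moreover have "continuous_on {0..t} (\<lambda>s. x s $ k)"
    by (intro continuous_on_component continuous_on_subset[OF dyn_solution_continuous[OF sol]]) auto
  ultimately obtain s where s: "0 \<le> s" "s \<le> t" "x s $ k = hi"
    using IVT2'[of "\<lambda>s. x s $ k" t hi 0] start(2) t by auto
  then have "x s \<in> simplex_slab k lo hi"
    using dyn_solution_in_simplex[OF sol] \<open>lo \<le> hi\<close> by (simp add: simplex_slab_def)
  moreover have "mean_fitness (x 0) \<le> mean_fitness (x s)"
    using mean_fitness_mono[OF sol] s by (auto simp: mono_on_def)
  ultimately show False
    using bound start(1) by fastforce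
qed

lemma mean_fitness_near_axis:
  assumes "M < F (axis k 1) $ k"
  shows "\<exists>\<delta>>0. \<forall>p\<in>pop_simplex. 1 - \<delta> < p $ k \<longrightarrow> M < mean_fitness p"
proof -
  obtain d where d: "0 < d"
    and near: "\<And>p. p \<in> pop_simplex \<Longrightarrow> dist p (axis k 1) < d \<Longrightarrow>
      dist (mean_fitness p) (mean_fitness (axis k 1)) < F (axis k 1) $ k - M"
    using mean_fitness_continuous axis_in_simplex assms unfolding continuous_on_iff
    by (metis diff_gt_0_iff_gt)
  have "M < mean_fitness p" if p: "p \<in> pop_simplex" "1 - d / 3 < p $ k" for p
  proof -
    have "dist p (axis k 1) < d"
      using dist_axis_le[OF p(1), of k] p(2) d by simp
    then show ?thesis
      using near[OF p(1)] by (simp add: mean_fitness_axis dist_real_def)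
  qed
  then show ?thesis
    using d by (intro exI[of _ "d / 3"]) auto
qed

lemma local_max_mean_fitness_imp_nash:
  assumes p: "p \<in> pop_simplex" and "0 < \<delta>"
    and local_max: "\<And>p'. p' \<in> pop_simplex \<Longrightarrow> dist p' p < \<delta> \<Longrightarrow> mean_fitness p' \<le> mean_fitness p"
  shows "nash_eq F p"
  unfolding nash_eq_def
proof (intro conjI ballI allI p)
  fix i j
  assume "i \<in> pop_supp p"
  define u where "u = min (p $ i) (\<delta> / 4)"
  have u: "0 < u" "u \<le> p $ i" "u \<le> \<delta> / 4"
    using \<open>i \<in> pop_supp p\<close> \<open>0 < \<delta>\<close> by (auto simp: u_def pop_supp_def)
  define p' where "p' = p + u *\<^sub>R (axis j 1 - axis i 1)"
  have p': "p' \<in> pop_simplex"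
    unfolding p'_def using move_mass_in_simplex[OF p] u by simp
  have "dist p' p < \<delta>"
    using dist_move_mass_le[of u p j i] u \<open>0 < \<delta>\<close> by (simp add: p'_def)
  then have "p' \<bullet> F p \<le> mean_fitness p"
    using self_optimal[OF p' p] local_max[OF p'] by (simp add: mean_fitness_def)
  then have "u * (F p $ j - F p $ i) \<le> 0"
    by (simp add: p'_def inner_move_mass mean_fitness_def)
  then show "F p $ j \<le> F p $ i"
    using u(1) by (simp add: mult_le_0_iff)
qed

lemma nash_move_mass_mean_fitness_ge:
  assumes ne: "nash_eq F q" and ij: "i \<in> pop_supp q" "j \<in> pop_supp q"
    and u: "0 \<le> u" "u \<le> q $ j"
  shows "mean_fitness q \<le> mean_fitness (q + u *\<^sub>R (axis i 1 - axis j 1))"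
proof -
  have q: "q \<in> pop_simplex"
    using ne by (simp add: nash_eq_def)
  have "F q $ i = F q $ j"
    using ne ij by (meson nash_eq_def order_antisym)
  then have "mean_fitness q = (q + u *\<^sub>R (axis i 1 - axis j 1)) \<bullet> F q"
    by (simp add: inner_move_mass mean_fitness_def)
  also have "\<dots> \<le> mean_fitness (q + u *\<^sub>R (axis i 1 - axis j 1))"
    unfolding mean_fitness_def by (rule self_optimal[OF move_mass_in_simplex[OF q u] q])
  finally show ?thesis .
qed

lemma stable_eq_local_max_mean_fitness:
  assumes "stable_eq F V q"
  shows "\<exists>\<epsilon>>0. \<forall>p\<in>pop_simplex. dist p q < \<epsilon> \<longrightarrow> mean_fitness p \<le> mean_fitness q"
proof -
  obtain \<epsilon> where \<epsilon>: "0 < \<epsilon>"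
    and attract: "\<And>x. dyn_solution V x \<Longrightarrow> dist (x 0) q < \<epsilon> \<Longrightarrow> (x \<longlongrightarrow> q) at_top"
    using assms unfolding stable_eq_def by blast
  have q: "q \<in> pop_simplex"
    using assms by (simp add: stable_eq_def nash_eq_def)
  have "mean_fitness p \<le> mean_fitness q" if p: "p \<in> pop_simplex" "dist p q < \<epsilon>" for p
  proof -
    obtain x where sol: "dyn_solution V x" and "x 0 = p"
      using admissible p(1) by (auto simp: admissible_dynamics_def)
    have "((\<lambda>t. mean_fitness (x t)) \<longlongrightarrow> mean_fitness q) at_top"
      using attract[OF sol] p(2) \<open>x 0 = p\<close> dyn_solution_in_simplex[OF sol]
      by (intro continuous_on_tendsto_compose[OF mean_fitness_continuous _ q])
        (auto simp: eventually_at_top_linorder)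
    moreover have "\<forall>\<^sub>F t in at_top. mean_fitness p \<le> mean_fitness (x t)"
      using mean_fitness_mono[OF sol] \<open>x 0 = p\<close>
      by (auto simp: eventually_at_top_linorder mono_on_def intro: exI[of _ 0])
    ultimately show ?thesis
      by (rule tendsto_lowerbound) simp
  qed
  then show ?thesis
    using \<epsilon> by blast
qed

theorem coexistence_eq_not_stable:
  assumes ne: "nash_eq F q" and coexist: "2 \<le> card (pop_supp q)"
  shows "\<not> stable_eq F V q"
proof
  assume stable: "stable_eq F V q"
  have q: "q \<in> pop_simplex"
    using ne by (simp add: nash_eq_def)
  obtain \<epsilon>1 where "0 < \<epsilon>1"
    and local_max: "\<And>p. p \<in> pop_simplex \<Longrightarrow> dist p q < \<epsilon>1 \<Longrightarrow> mean_fitness p \<le> mean_fitness q"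
    using stable_eq_local_max_mean_fitness[OF stable] by blast
  obtain \<epsilon>2 where "0 < \<epsilon>2"
    and isolated: "\<And>p. p \<in> pop_simplex \<Longrightarrow> dist p q < \<epsilon>2 \<Longrightarrow> V p = 0 \<Longrightarrow> p = q"
    using stable_eq_isolated_rest_point[OF stable] by blast
  define \<epsilon> where "\<epsilon> = min \<epsilon>1 \<epsilon>2"
  have "0 < \<epsilon>"
    using \<open>0 < \<epsilon>1\<close> \<open>0 < \<epsilon>2\<close> by (simp add: \<epsilon>_def)
  obtain i j where ij: "i \<in> pop_supp q" "j \<in> pop_supp q" "i \<noteq> j"
    using coexist card_le_Suc0_iff_eq[of "pop_supp q"] by fastforce
  define u where "u = min (\<epsilon> / 4) (q $ j)"
  have u: "0 < u" "u \<le> q $ j" "u \<le> \<epsilon> / 4"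
    using ij(2) \<open>0 < \<epsilon>\<close> by (auto simp: u_def pop_supp_def)
  define p where "p = q + u *\<^sub>R (axis i 1 - axis j 1)"
  have p: "p \<in> pop_simplex"
    unfolding p_def using move_mass_in_simplex[OF q] u by simp
  have "p \<noteq> q"
    using u ij(3) by (auto simp: p_def vec_eq_iff axis_def dest: spec[of _ i])
  have dist_pq: "dist p q \<le> \<epsilon> / 2"
    using dist_move_mass_le[of u q i j] u by (simp add: p_def)
  have ge: "mean_fitness q \<le> mean_fitness p"
    unfolding p_def using nash_move_mass_mean_fitness_ge[OF ne ij(1,2)] u by simp
  have "mean_fitness p' \<le> mean_fitness p" if "p' \<in> pop_simplex" "dist p' p < \<epsilon> / 2" for p'
    using local_max[OF that(1)] ge dist_triangle[of p' q p] dist_pq that(2)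
    by (simp add: \<epsilon>_def)
  then have "nash_eq F p"
    using local_max_mean_fitness_imp_nash[OF p, of "\<epsilon> / 2"] \<open>0 < \<epsilon>\<close> by simp
  then have "V p = 0"
    by (rule admissible_nash_rest_point[OF admissible])
  then show False
    using isolated[OF p] dist_pq \<open>0 < \<epsilon>\<close> \<open>p \<noteq> q\<close> by (simp add: \<epsilon>_def)
qed

theorem stable_eq_single_support:
  assumes stable: "stable_eq F V q"
  shows "card (pop_supp q) = 1"
proof -
  have ne: "nash_eq F q"
    using stable by (simp add: stable_eq_def)
  then have "pop_supp q \<noteq> {}"
    by (intro pop_supp_nonempty) (simp add: nash_eq_def)
  moreover have "\<not> 2 \<le> card (pop_supp q)"
    using coexistence_eq_not_stable[OF ne] stable by blast
  ultimately show ?thesis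
    using card_gt_0_iff[of "pop_supp q"] by auto
qed

end

section \<open>Stability of the best vertex\<close>

text \<open>
  By \<open>fitness_le_axis\<close>, \<open>F (axis i 1) $ i\<close> is the largest fitness group \<open>i\<close> ever attains, so
  \<open>exclusive_optimum\<close> says that no state is optimal for two groups at once; for oracle games this
  is the absence of shared oracle classifiers.
\<close>

locale exclusive_self_optimal_game = self_optimal_game +
  assumes exclusive_optimum:
    "p \<in> pop_simplex \<Longrightarrow> i \<noteq> j \<Longrightarrow> F p $ i < F (axis i 1) $ i \<or> F p $ j < F (axis j 1) $ j"
begin

context
  fixes k
  assumes best: "\<And>j. F (axis j 1) $ j \<le> F (axis k 1) $ k"
begin

lemma best_axis_strictly_fittest: "j \<noteq> k \<Longrightarrow> F (axis k 1) $ j < F (axis k 1) $ k"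
  using exclusive_optimum[OF axis_in_simplex[of k], of k j] best[of j] by auto

lemma best_axis_nash: "nash_eq F (axis k 1)"
proof -
  have "F (axis k 1) $ j \<le> F (axis k 1) $ k" for j
    using best_axis_strictly_fittest[of j] by (cases "j = k") auto
  then show ?thesis
    by (simp add: nash_eq_def pop_supp_axis axis_in_simplex)
qed

lemma mean_fitness_less_best:
  assumes p: "p \<in> pop_simplex" "0 < p $ k" "p $ k < 1"
  shows "mean_fitness p < F (axis k 1) $ k"
proof -
  define a where "a = F (axis k 1) $ k"
  obtain j where j: "j \<noteq> k" "0 < p $ j"
    using simplex_other_coordinate_pos[OF p(1,3)] by blast
  obtain i where i: "0 < p $ i" "F p $ i < a"
    using exclusive_optimum[OF p(1) j(1)] best[of j] j p(2) unfolding a_def by force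
  have gap_nonneg: "0 \<le> p $ l * (a - F p $ l)" for l
    using fitness_le_axis[OF p(1), of l] best[of l] simplex_nonneg[OF p(1), of l]
    by (simp add: a_def)
  have "0 < p $ i * (a - F p $ i)"
    using i by simp
  also have "\<dots> \<le> (\<Sum>l\<in>UNIV. p $ l * (a - F p $ l))"
    by (rule member_le_sum) (use gap_nonneg in auto)
  also have "\<dots> = a - mean_fitness p"
    using simplex_sum[OF p(1)]
    by (simp add: mean_fitness_def inner_vec_def right_diff_distrib sum_subtractf
        flip: sum_distrib_right)
  finally show ?thesis
    by (simp add: a_def)
qed

lemma mean_fitness_slab_bound:
  assumes "0 < lo" "hi < 1"
  shows "\<exists>m < F (axis k 1) $ k. \<forall>p\<in>simplex_slab k lo hi. mean_fitness p \<le> m"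
proof (cases "simplex_slab k lo hi = {}")
  case True
  then show ?thesis
    by (intro exI[of _ "F (axis k 1) $ k - 1"]) auto
next
  case False
  have "continuous_on (simplex_slab k lo hi) mean_fitness"
    by (rule continuous_on_subset[OF mean_fitness_continuous]) (auto simp: simplex_slab_def)
  then obtain p where "p \<in> simplex_slab k lo hi"
    and "\<forall>p'\<in>simplex_slab k lo hi. mean_fitness p' \<le> mean_fitness p"
    using continuous_attains_sup[OF compact_simplex_slab False] by blast
  moreover have "mean_fitness p < F (axis k 1) $ k"
    using \<open>p \<in> simplex_slab k lo hi\<close> assms by (intro mean_fitness_less_best) (auto simp: simplex_slab_def)
  ultimately show ?thesis
    by blast
qed

lemma no_rest_point_near_best_axis:
  obtains r where "0 < r" "r < 1"
    "\<And>p. p \<in> pop_simplex \<Longrightarrow> 1 - r \<le> p $ k \<Longrightarrow> p $ k < 1 \<Longrightarrow> V p \<noteq> 0"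
proof -
  have "\<forall>\<^sub>F p in at (axis k 1) within pop_simplex. F p $ j < F p $ k" if "j \<noteq> k" for j
  proof -
    have "((\<lambda>p. F p $ k - F p $ j) \<longlongrightarrow> F (axis k 1) $ k - F (axis k 1) $ j)
        (at (axis k 1) within pop_simplex)"
      using fitness_continuous axis_in_simplex unfolding continuous_on_def
      by (intro tendsto_diff tendsto_vec_nth) auto
    moreover have "0 < F (axis k 1) $ k - F (axis k 1) $ j"
      using best_axis_strictly_fittest[OF that] by simp
    ultimately have "\<forall>\<^sub>F p in at (axis k 1) within pop_simplex. 0 < F p $ k - F p $ j"
      by (rule order_tendstoD(1))
    then show ?thesis
      by eventually_elim simp
  qed
  then have "\<forall>\<^sub>F p in at (axis k 1) within pop_simplex. \<forall>j. j \<noteq> k \<longrightarrow> F p $ j < F p $ k"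
    by (simp add: eventually_all_finite)
  then obtain d where "0 < d" and fittest: "\<And>p j. p \<in> pop_simplex \<Longrightarrow> p \<noteq> axis k 1 \<Longrightarrow>
      dist p (axis k 1) < d \<Longrightarrow> j \<noteq> k \<Longrightarrow> F p $ j < F p $ k"
    unfolding eventually_at by blast
  define r where "r = min (d / 3) (1 / 2)"
  have "V p \<noteq> 0" if p: "p \<in> pop_simplex" "1 - r \<le> p $ k" "p $ k < 1" for p
  proof
    assume "V p = 0"
    obtain j where j: "j \<noteq> k" "0 < p $ j"
      using simplex_other_coordinate_pos[OF p(1,3)] by blast
    have "0 < p $ k"
      using p(2) by (simp add: r_def)
    then have "F p $ k \<le> F p $ j"
      using admissible_rest_point_fitness_le[OF admissible p(1) \<open>V p = 0\<close>] j(2)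
      by (simp add: pop_supp_def)
    moreover have "p \<noteq> axis k 1"
      using p(3) by auto
    moreover have "dist p (axis k 1) < d"
      using dist_axis_le[OF p(1), of k] p(2) \<open>0 < d\<close> by (simp add: r_def)
    ultimately show False
      using fittest[OF p(1) _ _ j(1)] by fastforce
  qed
  moreover have "0 < r" "r < 1"
    using \<open>0 < d\<close> by (auto simp: r_def)
  ultimately show ?thesis
    using that by blast
qed

lemma eventually_near_best_axis:
  assumes sol: "dyn_solution V x" and "0 < r" "r < 1"
    and no_rest: "\<And>p. p \<in> pop_simplex \<Longrightarrow> 1 - r \<le> p $ k \<Longrightarrow> p $ k < 1 \<Longrightarrow> V p \<noteq> 0"
    and stays: "\<And>t. 0 \<le> t \<Longrightarrow> 1 - r \<le> x t $ k"
    and "0 < \<delta>" "\<delta> \<le> r"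
  shows "\<forall>\<^sub>F t in at_top. 1 - \<delta> < x t $ k"
proof (rule ccontr)
  assume "\<not> ?thesis"
  then have recurrent: "\<exists>t'\<ge>t. x t' $ k \<le> 1 - \<delta>" for t
    by (auto simp: eventually_at_top_linorder not_less)
  have x: "\<And>t. 0 \<le> t \<Longrightarrow> x t \<in> pop_simplex"
    using dyn_solution_in_simplex[OF sol] .
  obtain m where "m < F (axis k 1) $ k"
    and m: "\<And>p. p \<in> simplex_slab k (1 - r) (1 - \<delta>) \<Longrightarrow> mean_fitness p \<le> m"
    using mean_fitness_slab_bound[of "1 - r" "1 - \<delta>"] \<open>r < 1\<close> \<open>0 < \<delta>\<close> by auto
  \<comment> \<open>The trajectory keeps returning to the slab, so by monotonicity its mean fitness never exceeds m \<dots>\<close>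
  have below_m: "mean_fitness (x t) \<le> m" if "0 \<le> t" for t
  proof -
    obtain t' where "t \<le> t'" "x t' $ k \<le> 1 - \<delta>"
      using recurrent by blast
    then have "mean_fitness (x t') \<le> m"
      using m x[of t'] stays[of t'] that by (simp add: simplex_slab_def)
    moreover have "mean_fitness (x t) \<le> mean_fitness (x t')"
      using mean_fitness_mono[OF sol] \<open>t \<le> t'\<close> that by (simp add: mono_on_def)
    ultimately show ?thesis
      by simp
  qed
  \<comment> \<open>\<dots> which confines it to a compact slab without rest points.\<close>
  obtain \<delta>' where "0 < \<delta>'" and \<delta>': "\<And>p. p \<in> pop_simplex \<Longrightarrow> 1 - \<delta>' < p $ k \<Longrightarrow> m < mean_fitness p"
    using mean_fitness_near_axis[OF \<open>m < _\<close>] by blast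
  have "x t \<in> simplex_slab k (1 - r) (1 - \<delta>')" if "0 \<le> t" for t
    using \<delta>'[OF x[OF that]] below_m[OF that] stays[OF that] x[OF that]
    by (force simp: simplex_slab_def)
  moreover have "\<exists>t\<ge>0. x t \<notin> simplex_slab k (1 - r) (1 - \<delta>')"
    using no_rest \<open>0 < \<delta>'\<close>
    by (intro dyn_solution_leaves_rest_free_compact[OF sol compact_simplex_slab])
      (auto simp: simplex_slab_def)
  ultimately show False
    by blast
qed

theorem best_axis_stable: "stable_eq F V (axis k 1)"
proof -
  obtain r where "0 < r" "r < 1"
    and no_rest: "\<And>p. p \<in> pop_simplex \<Longrightarrow> 1 - r \<le> p $ k \<Longrightarrow> p $ k < 1 \<Longrightarrow> V p \<noteq> 0"
    using no_rest_point_near_best_axis by blast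
  obtain m where "m < F (axis k 1) $ k"
    and m: "\<And>p. p \<in> simplex_slab k (1 - r) (1 - r / 2) \<Longrightarrow> mean_fitness p \<le> m"
    using mean_fitness_slab_bound[of "1 - r" "1 - r / 2"] \<open>0 < r\<close> \<open>r < 1\<close> by auto
  obtain \<delta> where "0 < \<delta>" and \<delta>: "\<And>p. p \<in> pop_simplex \<Longrightarrow> 1 - \<delta> < p $ k \<Longrightarrow> m < mean_fitness p"
    using mean_fitness_near_axis[OF \<open>m < _\<close>] by blast
  define \<epsilon> where "\<epsilon> = min \<delta> (r / 2)"
  have "(x \<longlongrightarrow> axis k 1) at_top" if sol: "dyn_solution V x" and "dist (x 0) (axis k 1) < \<epsilon>" for x
  proof -
    have x: "\<And>t. 0 \<le> t \<Longrightarrow> x t \<in> pop_simplex"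
      using dyn_solution_in_simplex[OF sol] .
    have "1 - \<epsilon> < x 0 $ k"
      using component_le_norm_cart[of "x 0 - axis k 1" k] \<open>dist (x 0) _ < \<epsilon>\<close>
      by (simp add: dist_norm)
    \<comment> \<open>The mean fitness starts above its maximum m on the slab, so the trajectory cannot cross it.\<close>
    then have "1 - r / 2 < x t $ k" if "0 \<le> t" for t
      using \<delta>[OF x[of 0]] \<open>0 < r\<close> that
      by (intro mean_fitness_trap[OF sol, where lo = "1 - r" and hi = "1 - r / 2" and k = k and m = m] m)
        (auto simp: \<epsilon>_def)
    then have "\<forall>\<^sub>F t in at_top. 1 - \<delta>' < x t $ k" if "0 < \<delta>'" for \<delta>'
      using eventually_near_best_axis[OF sol \<open>0 < r\<close> \<open>r < 1\<close> no_rest, of "min \<delta>' r"] that \<open>0 < r\<close>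
      by (force elim: eventually_mono)
    moreover have "\<forall>\<^sub>F t in at_top. x t \<in> pop_simplex"
      using x by (auto simp: eventually_at_top_linorder)
    ultimately show ?thesis
      by (intro tendsto_axis_if_coordinate_near_1)
  qed
  moreover have "0 < \<epsilon>"
    using \<open>0 < \<delta>\<close> \<open>0 < r\<close> by (simp add: \<epsilon>_def)
  ultimately show ?thesis
    using best_axis_nash by (auto simp: stable_eq_def)
qed

end

theorem stable_eq_exists: "\<exists>q. stable_eq F V q"
proof -
  let ?own_best = "\<lambda>j. F (axis j 1) $ j"
  have "(MAX j. ?own_best j) \<in> range ?own_best"
    by (rule Max_in) auto
  then obtain k where k: "(MAX j. ?own_best j) = ?own_best k"
    by blast
  have "?own_best j \<le> ?own_best k" for j
    unfolding k[symmetric] by (rule Max_ge) auto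
  then show ?thesis
    using best_axis_stable by blast
qed

end

section \<open>Oracle games\<close>

lemma err_eq_1_minus_acc:
  assumes "prob_space M" "{z \<in> space M. h (fst z) = snd z} \<in> sets M"
  shows "err M h = 1 - acc M h"
proof -
  have "{z \<in> space M. h (fst z) \<noteq> snd z} = space M - {z \<in> space M. h (fst z) = snd z}"
    by auto
  then show ?thesis
    unfolding err_def acc_def using prob_space.prob_compl[OF assms] by simp
qed

lemma mix_acc_fitness: "mix_acc D p (sel p') = p \<bullet> fitness D sel p'"
  by (simp add: mix_acc_def fitness_def inner_vec_def)

lemma mix_err_axis: "mix_err D (axis k 1) h = err (D k) h"
  unfolding mix_err_def axis_def by (simp add: mult_if_delta)

context
  fixes D :: "'k::finite \<Rightarrow> ('x \<times> 'y) measure" and H sel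
  assumes game: "oracle_game D H sel"
begin

lemma oracle_game_err_eq: "h \<in> H \<Longrightarrow> err (D k) h = 1 - acc (D k) h"
  using game by (intro err_eq_1_minus_acc) (auto simp: oracle_game_def)

lemma oracle_game_mix_err_eq:
  assumes "p \<in> pop_simplex" "h \<in> H"
  shows "mix_err D p h = 1 - mix_acc D p h"
  using simplex_sum[OF assms(1)] oracle_game_err_eq[OF assms(2)]
  by (simp add: mix_err_def mix_acc_def right_diff_distrib sum_subtractf)

lemma oracle_game_selection:
  "p \<in> pop_simplex \<Longrightarrow> sel p \<in> H \<and> (\<forall>h\<in>H. mix_err D p (sel p) \<le> mix_err D p h)"
  using game by (simp add: oracle_game_def oracle_selection_def)

lemma oracle_game_self_optimal:
  assumes "p \<in> pop_simplex" "p' \<in> pop_simplex"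
  shows "p \<bullet> fitness D sel p' \<le> p \<bullet> fitness D sel p"
proof -
  have "sel p \<in> H" "sel p' \<in> H" "mix_err D p (sel p) \<le> mix_err D p (sel p')"
    using oracle_game_selection[OF assms(1)] oracle_game_selection[OF assms(2)] by blast+
  then show ?thesis
    using oracle_game_mix_err_eq[OF assms(1)] by (simp flip: mix_acc_fitness)
qed

lemma oracle_game_axis_fitness_attained:
  assumes p: "p \<in> pop_simplex" and "fitness D sel (axis k 1) $ k \<le> fitness D sel p $ k"
  shows "sel p \<in> oracle_set H (D k)"
proof -
  have H: "sel p \<in> H" "sel (axis k 1) \<in> H"
    using oracle_game_selection p axis_in_simplex by blast+
  have "err (D k) (sel p) \<le> err (D k) h" if "h \<in> H" for h
  proof -
    have "err (D k) (sel p) \<le> err (D k) (sel (axis k 1))"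
      using assms(2) H by (simp add: fitness_def oracle_game_err_eq)
    also have "\<dots> \<le> err (D k) h"
      using oracle_game_selection[OF axis_in_simplex] that by (simp add: mix_err_axis)
    finally show ?thesis .
  qed
  then show ?thesis
    using H by (simp add: oracle_set_def)
qed

lemma oracle_game_exclusive:
  assumes dyn: "admissible_dynamics (fitness D sel) V"
  shows "exclusive_self_optimal_game (fitness D sel) V"
proof
  show "continuous_on pop_simplex (fitness D sel)"
    using game by (simp add: oracle_game_def)
  show "admissible_dynamics (fitness D sel) V"
    by (rule dyn)
  show "p \<bullet> fitness D sel p' \<le> p \<bullet> fitness D sel p" if "p \<in> pop_simplex" "p' \<in> pop_simplex" for p p'
    using oracle_game_self_optimal[OF that] .
  show "fitness D sel p $ i < fitness D sel (axis i 1) $ i \<or> fitness D sel p $ j < fitness D sel (axis j 1) $ j"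
    if "p \<in> pop_simplex" "i \<noteq> j" for p i j
    using oracle_game_axis_fitness_attained[OF that(1)] game that(2)
    by (force simp: oracle_game_def no_shared_oracle_def)
qed

end

section \<open>A two-group example\<close>

definition two_groups :: "bool \<Rightarrow> (real \<times> bool) measure" where
  "two_groups b = distr (uniform_measure lborel {0..1}) (borel \<Otimes>\<^sub>M count_space UNIV)
     (\<lambda>x. (if b then x else x + 2, b))"

definition circle_classifier :: "real ^ bool \<Rightarrow> real \<Rightarrow> bool" where
  "circle_classifier w y = (if y < 2 then y \<le> w $ True else w $ False < y - 2)"

definition unit_quadrant :: "(real ^ bool) set" where
  "unit_quadrant = {w. norm w = 1 \<and> (\<forall>b. 0 \<le> w $ b)}"

definition circle_class :: "(real \<Rightarrow> bool) set" where
  "circle_class = circle_classifier ` unit_quadrant"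

definition circle_oracle :: "real ^ bool \<Rightarrow> real \<Rightarrow> bool" where
  "circle_oracle p = circle_classifier (sgn p)"

lemma two_groups_embedding_measurable:
  "(\<lambda>x. (if b then x else x + 2, b)) \<in> uniform_measure lborel {0..1} \<rightarrow>\<^sub>M borel \<Otimes>\<^sub>M count_space UNIV"
  by (subst measurable_cong_sets[of _ borel]) auto

lemma prob_space_two_groups: "prob_space (two_groups b)"
  unfolding two_groups_def
  by (intro prob_space.prob_space_distr[OF _ two_groups_embedding_measurable] prob_space_uniform_measure)
    auto

lemma space_two_groups: "space (two_groups b) = UNIV"
  by (simp add: two_groups_def space_pair_measure)

lemma circle_classifier_event_measurable:
  "{z. circle_classifier w (fst z) = snd z} \<in> sets (borel \<Otimes>\<^sub>M count_space (UNIV :: bool set))"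
proof -
  have "{z \<in> space (borel \<Otimes>\<^sub>M count_space UNIV). circle_classifier w (fst z) = snd z}
      \<in> sets (borel \<Otimes>\<^sub>M count_space (UNIV :: bool set))"
    unfolding circle_classifier_def by measurable
  then show ?thesis
    by (simp add: space_pair_measure)
qed

lemma measure_two_groups:
  assumes A: "A \<in> sets (borel \<Otimes>\<^sub>M count_space UNIV)"
  shows "measure (two_groups b) A = measure lborel ({0..1} \<inter> {x. (if b then x else x + 2, b) \<in> A})"
proof -
  let ?f = "\<lambda>x. (if b then x else x + 2, b)"
  have "?f -` A \<inter> space (uniform_measure lborel {0..1::real}) \<in> sets (uniform_measure lborel {0..1})"
    by (rule measurable_sets[OF two_groups_embedding_measurable A])
  then have "?f -` A \<in> sets lborel"
    by simp
  then show ?thesis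
    unfolding two_groups_def using measure_distr[OF two_groups_embedding_measurable A]
    by (simp add: measure_uniform_measure vimage_def Int_commute)
qed

lemma acc_two_groups:
  assumes "0 \<le> w $ b" "w $ b \<le> 1"
  shows "acc (two_groups b) (circle_classifier w) = w $ b"
proof -
  have "acc (two_groups b) (circle_classifier w)
      = measure lborel ({0..1} \<inter> {x. circle_classifier w (if b then x else x + 2) = b})"
    unfolding acc_def space_two_groups
    by (simp add: measure_two_groups[OF circle_classifier_event_measurable])
  also have "{0..1} \<inter> {x. circle_classifier w (if b then x else x + 2) = b} = {0..w $ b}"
    using assms by (cases b) (auto simp: circle_classifier_def)
  finally show ?thesis
    using assms by simp
qed

lemma circle_classifier_event_in_sets:
  "{z \<in> space (two_groups b). circle_classifier w (fst z) = snd z} \<in> sets (two_groups b)"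
  using circle_classifier_event_measurable[of w]
  by (simp add: space_two_groups two_groups_def space_pair_measure)

lemma err_two_groups:
  assumes "0 \<le> w $ b" "w $ b \<le> 1"
  shows "err (two_groups b) (circle_classifier w) = 1 - w $ b"
  using err_eq_1_minus_acc[OF prob_space_two_groups circle_classifier_event_in_sets]
    acc_two_groups[OF assms] by simp

lemma sum_UNIV_bool: "(\<Sum>b\<in>UNIV. f b) = f True + f False"
  by (simp add: UNIV_bool add.commute)

lemma simplex_bool_iff: "p \<in> pop_simplex \<longleftrightarrow> 0 \<le> p $ True \<and> 0 \<le> p $ False \<and> p $ True + p $ False = 1"
  by (auto simp: pop_simplex_def sum_UNIV_bool all_bool_eq)

lemma norm_pow_2_bool_vec: "(norm (w :: real ^ bool))\<^sup>2 = (w $ True)\<^sup>2 + (w $ False)\<^sup>2"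
  unfolding power2_norm_eq_inner by (simp add: inner_vec_def sum_UNIV_bool power2_eq_square)

lemma unit_quadrant_nth: "w \<in> unit_quadrant \<Longrightarrow> 0 \<le> w $ b \<and> w $ b \<le> 1"
  using component_le_norm_cart[of w b] by (auto simp: unit_quadrant_def)

lemma sgn_simplex_in_unit_quadrant: "p \<in> pop_simplex \<Longrightarrow> sgn p \<in> unit_quadrant"
  using simplex_nonzero[of p] simplex_nonneg[of p]
  by (simp add: unit_quadrant_def norm_sgn sgn_div_norm)

lemma fitness_two_groups:
  "p \<in> pop_simplex \<Longrightarrow> fitness two_groups circle_oracle p = sgn p"
  using unit_quadrant_nth[OF sgn_simplex_in_unit_quadrant]
  by (simp add: fitness_def circle_oracle_def acc_two_groups vec_eq_iff)

lemma mix_err_two_groups: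
  assumes "w \<in> unit_quadrant"
  shows "p \<in> pop_simplex \<Longrightarrow> mix_err two_groups p (circle_classifier w) = 1 - p \<bullet> w"
  using unit_quadrant_nth[OF assms]
  by (simp add: mix_err_def err_two_groups inner_vec_def sum_UNIV_bool simplex_bool_iff algebra_simps)

lemma inner_le_inner_sgn:
  fixes p w :: "'a::real_inner"
  assumes "norm w = 1"
  shows "p \<bullet> w \<le> p \<bullet> sgn p"
proof -
  have "p \<bullet> sgn p = norm p"
    by (cases "p = 0") (simp_all add: sgn_div_norm dot_square_norm power2_eq_square)
  then show ?thesis
    using norm_cauchy_schwarz[of p w] assms by simp
qed

lemma two_groups_oracle_game: "oracle_game two_groups circle_class circle_oracle"
  unfolding oracle_game_def
proof (intro conjI allI ballI)
  show "prob_space (two_groups k)" for k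
    by (rule prob_space_two_groups)
  show "{z \<in> space (two_groups k). h (fst z) = snd z} \<in> sets (two_groups k)" if "h \<in> circle_class" for k h
    using that circle_classifier_event_in_sets by (auto simp: circle_class_def)
  show "oracle_selection two_groups circle_class circle_oracle"
    unfolding oracle_selection_def circle_class_def circle_oracle_def
    using sgn_simplex_in_unit_quadrant mix_err_two_groups inner_le_inner_sgn
    by (auto simp: unit_quadrant_def)
  show "continuous_on pop_simplex (fitness two_groups circle_oracle)"
    using simplex_nonzero
    by (subst continuous_on_cong[OF refl fitness_two_groups]) (auto intro!: continuous_intros)
  \<comment> \<open>An oracle classifier of group b must have w $ b = 1, which leaves no room on the unit circle
    for the other group.\<close>
  have oracle_coordinate: "w $ b = 1"
    if "w \<in> unit_quadrant" "circle_classifier w \<in> oracle_set circle_class (two_groups b)" for w b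
  proof -
    have "\<forall>b'. 0 \<le> axis b (1::real) $ b'"
      by (simp add: axis_def)
    then have "axis b 1 \<in> unit_quadrant"
      by (simp add: unit_quadrant_def)
    then have "err (two_groups b) (circle_classifier w) \<le> err (two_groups b) (circle_classifier (axis b 1))"
      using that(2) by (simp add: oracle_set_def circle_class_def)
    then show ?thesis
      using unit_quadrant_nth[OF that(1), of b] unit_quadrant_nth[OF \<open>axis b 1 \<in> _\<close>, of b]
      by (simp add: err_two_groups)
  qed
  show "no_shared_oracle two_groups circle_class"
    unfolding no_shared_oracle_def
  proof (intro allI impI notI)
    fix k k' :: bool
    assume "k \<noteq> k'"
      and "\<exists>h. h \<in> oracle_set circle_class (two_groups k) \<and> h \<in> oracle_set circle_class (two_groups k')"
    then obtain w where w: "w \<in> unit_quadrant"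
      and "circle_classifier w \<in> oracle_set circle_class (two_groups k)"
        "circle_classifier w \<in> oracle_set circle_class (two_groups k')"
      by (auto simp: oracle_set_def circle_class_def)
    then have "w $ k = 1" "w $ k' = 1"
      using oracle_coordinate by blast+
    with \<open>k \<noteq> k'\<close> have "w $ True = 1" "w $ False = 1"
      by (cases k; simp)+
    then show False
      using norm_pow_2_bool_vec[of w] w by (simp add: unit_quadrant_def)
  qed
qed

text \<open>
  Under \<open>gap_velocity\<close> the gap \<open>z = p\<^sub>1 - p\<^sub>2\<close> solves \<open>z' = z (1 - \<bar>z\<bar>)\<close>, whose rest points
  \<open>z \<in> {-1, 0, 1}\<close> are exactly the Nash equilibria, and which has explicit logistic solutions.
\<close>

definition gap_rate :: "real \<Rightarrow> real" where
  "gap_rate z = z * (1 - \<bar>z\<bar>)"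

definition gap_velocity :: "real ^ bool \<Rightarrow> real ^ bool" where
  "gap_velocity p = (gap_rate (p $ True - p $ False) / 2) *\<^sub>R (axis True 1 - axis False 1)"

lemma gap_velocity_eq_0_iff: "gap_velocity p = 0 \<longleftrightarrow> gap_rate (p $ True - p $ False) = 0"
  by (auto simp: gap_velocity_def vec_eq_iff axis_def)

lemma nash_two_groups_iff:
  assumes p: "p \<in> pop_simplex"
  shows "nash_eq (fitness two_groups circle_oracle) p \<longleftrightarrow> gap_rate (p $ True - p $ False) = 0"
proof -
  have "0 < norm p"
    using simplex_nonzero[OF p] by simp
  then have "nash_eq (fitness two_groups circle_oracle) p \<longleftrightarrow>
      (0 < p $ True \<longrightarrow> p $ False \<le> p $ True) \<and> (0 < p $ False \<longrightarrow> p $ True \<le> p $ False)"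
    using p by (simp add: nash_eq_def pop_supp_def fitness_two_groups sgn_div_norm
        all_bool_eq divide_le_cancel)
  also have "\<dots> \<longleftrightarrow> gap_rate (p $ True - p $ False) = 0"
    using p unfolding simplex_bool_iff gap_rate_def abs_if by auto
  finally show ?thesis .
qed

lemma gap_rate_logistic:
  assumes "\<bar>z0\<bar> \<le> 1"
  defines "z \<equiv> \<lambda>t. z0 * exp t / (1 - \<bar>z0\<bar> + \<bar>z0\<bar> * exp t)"
  shows "z 0 = z0" "\<bar>z t\<bar> \<le> 1" "(z has_real_derivative gap_rate (z t)) (at t within S)"
proof -
  have denom_pos: "0 < 1 - \<bar>z0\<bar> + \<bar>z0\<bar> * exp t" for t
    using assms(1) by (cases "z0 = 0") (auto intro: add_nonneg_pos)
  have abs_z: "\<bar>z t\<bar> = \<bar>z0\<bar> * exp t / (1 - \<bar>z0\<bar> + \<bar>z0\<bar> * exp t)" for t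
    using denom_pos[of t] by (simp add: z_def abs_mult)
  show "z 0 = z0"
    by (simp add: z_def)
  show "\<bar>z t\<bar> \<le> 1"
    unfolding abs_z using denom_pos[of t] assms(1) by simp
  have "(z has_real_derivative
      (z0 * exp t * (1 - \<bar>z0\<bar> + \<bar>z0\<bar> * exp t) - z0 * exp t * (\<bar>z0\<bar> * exp t))
        / (1 - \<bar>z0\<bar> + \<bar>z0\<bar> * exp t)\<^sup>2) (at t within S)"
    unfolding z_def
    by (rule derivative_eq_intros refl | simp add: denom_pos less_imp_neq[symmetric] power2_eq_square)+
  also have "(z0 * exp t * (1 - \<bar>z0\<bar> + \<bar>z0\<bar> * exp t) - z0 * exp t * (\<bar>z0\<bar> * exp t))
        / (1 - \<bar>z0\<bar> + \<bar>z0\<bar> * exp t)\<^sup>2 = gap_rate (z t)"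
    unfolding gap_rate_def abs_z using denom_pos[of t]
    by (simp add: z_def field_simps power2_eq_square)
  finally show "(z has_real_derivative gap_rate (z t)) (at t within S)" .
qed

lemma gap_velocity_solution_exists:
  assumes x0: "x0 \<in> pop_simplex"
  shows "\<exists>x. dyn_solution gap_velocity x \<and> x 0 = x0"
proof -
  define z0 where "z0 = x0 $ True - x0 $ False"
  have "\<bar>z0\<bar> \<le> 1"
    using x0 by (auto simp: z0_def simplex_bool_iff)
  define z where "z t = z0 * exp t / (1 - \<bar>z0\<bar> + \<bar>z0\<bar> * exp t)" for t
  note logistic = gap_rate_logistic[OF \<open>\<bar>z0\<bar> \<le> 1\<close>, folded z_def]
  define x where "x t = (\<chi> b. 1 / 2) + (z t / 2) *\<^sub>R (axis True 1 - axis False 1 :: real ^ bool)" for t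
  have x_True: "x t $ True = (1 + z t) / 2" and x_False: "x t $ False = (1 - z t) / 2" for t
    by (simp_all add: x_def axis_def field_simps)
  have "x t \<in> pop_simplex" for t
    using logistic(2)[of t] unfolding simplex_bool_iff x_True x_False by (auto simp: abs_le_iff field_simps)
  moreover have "(x has_vector_derivative gap_velocity (x t)) (at t within {0..})" for t
  proof -
    have "(x has_vector_derivative (gap_rate (z t) / 2) *\<^sub>R (axis True 1 - axis False 1))
        (at t within {0..})"
      unfolding x_def using logistic(3)[of t]
      by (auto intro!: derivative_eq_intros simp: has_real_derivative_iff_has_vector_derivative)
    moreover have "x t $ True - x t $ False = z t"
      by (simp add: x_True x_False field_simps)
    ultimately show ?thesis
      by (simp add: gap_velocity_def)
  qed
  moreover have "x 0 = x0"
    using logistic(1) x0 by (auto simp: vec_eq_iff all_bool_eq x_True x_False z0_def simplex_bool_iff)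
  ultimately show ?thesis
    by (auto simp: dyn_solution_def)
qed

lemma two_groups_admissible: "admissible_dynamics (fitness two_groups circle_oracle) gap_velocity"
  unfolding admissible_dynamics_def
proof (intro conjI ballI impI)
  show "continuous_on pop_simplex gap_velocity"
    unfolding gap_velocity_def gap_rate_def by (intro continuous_intros) auto
  show "(\<Sum>k\<in>UNIV. gap_velocity p $ k) = 0" for p
    by (simp add: gap_velocity_def sum_UNIV_bool axis_def)
  show "nash_stationary (fitness two_groups circle_oracle) gap_velocity \<or>
      imitative (fitness two_groups circle_oracle) gap_velocity"
    by (simp add: nash_stationary_def gap_velocity_eq_0_iff nash_two_groups_iff)
  show "\<exists>x. dyn_solution gap_velocity x \<and> x 0 = x0" if "x0 \<in> pop_simplex" for x0
    using gap_velocity_solution_exists[OF that] .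
  show "0 < gap_velocity p \<bullet> fitness two_groups circle_oracle p"
    if p: "p \<in> pop_simplex" and "gap_velocity p \<noteq> 0" for p
  proof -
    define z where "z = p $ True - p $ False"
    have "\<bar>z\<bar> \<le> 1" "gap_rate z \<noteq> 0"
      using p \<open>gap_velocity p \<noteq> 0\<close> by (auto simp: z_def simplex_bool_iff gap_velocity_eq_0_iff)
    then have "0 < gap_rate z * z"
      by (auto simp: gap_rate_def zero_less_mult_iff mult_less_0_iff)
    moreover have "gap_velocity p \<bullet> sgn p = gap_rate z * z / (2 * norm p)"
      by (simp add: gap_velocity_def z_def sgn_div_norm inner_diff_left inner_axis')
        (simp add: field_simps)
    ultimately show ?thesis
      using simplex_nonzero[OF p] by (simp add: fitness_two_groups[OF p])
  qed
qed

lemma two_groups_multiple_stable: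
  "\<exists>q1 q2. q1 \<noteq> q2 \<and> stable_eq (fitness two_groups circle_oracle) gap_velocity q1
    \<and> stable_eq (fitness two_groups circle_oracle) gap_velocity q2"
proof -
  interpret exclusive_self_optimal_game "fitness two_groups circle_oracle" gap_velocity
    by (rule oracle_game_exclusive[OF two_groups_oracle_game two_groups_admissible])
  have "fitness two_groups circle_oracle (axis j 1) $ j = 1" for j
    by (simp add: fitness_two_groups axis_in_simplex sgn_div_norm)
  then have "stable_eq (fitness two_groups circle_oracle) gap_velocity (axis b 1)" for b
    by (intro best_axis_stable) simp
  moreover have "axis True 1 \<noteq> (axis False 1 :: real ^ bool)"
    by (simp add: axis_eq_axis)
  ultimately show ?thesis
    by blast
qed

lemma two_groups_coexistence:
  "\<exists>q. nash_eq (fitness two_groups circle_oracle) q \<and> 2 \<le> card (pop_supp q)"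
proof -
  have "(\<chi> b. 1 / 2 :: real ^ bool) \<in> pop_simplex"
    by (simp add: simplex_bool_iff)
  then have "nash_eq (fitness two_groups circle_oracle) (\<chi> b. 1 / 2)
      \<and> card (pop_supp (\<chi> b. 1 / 2 :: real ^ bool)) = 2"
    by (simp add: nash_two_groups_iff gap_rate_def pop_supp_def)
  then show ?thesis
    by (intro exI[of _ "\<chi> b. 1 / 2"]) simp
qed

theorem theorem1:
  fixes D :: "'k::finite \<Rightarrow> ('x \<times> 'y) measure"
    and H :: "('x \<Rightarrow> 'y) set"
    and sel :: "real ^ 'k \<Rightarrow> ('x \<Rightarrow> 'y)"
    and V :: "real ^ 'k \<Rightarrow> real ^ 'k"
  assumes game: "oracle_game D H sel"
    and dyn: "admissible_dynamics (fitness D sel) V"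
  shows
    \<comment> \<open>(1) accuracy is non-decreasing along trajectories\<close>
    "(\<forall>x. dyn_solution V x \<longrightarrow> mono_on {0..} (\<lambda>t. mix_acc D (x t) (sel (x t))))
     \<comment> \<open>(2) a stable equilibrium exists\<close>
     \<and> (\<exists>q. stable_eq (fitness D sel) V q)
     \<comment> \<open>(2) there can be multiple stable equilibria\<close>
     \<and> (\<exists>(D' :: bool \<Rightarrow> (real \<times> bool) measure) (H' :: (real \<Rightarrow> bool) set)
          (sel' :: real ^ bool \<Rightarrow> (real \<Rightarrow> bool)) (V' :: real ^ bool \<Rightarrow> real ^ bool).
          oracle_game D' H' sel' \<and> admissible_dynamics (fitness D' sel') V' \<and>
          (\<exists>q1 q2. q1 \<noteq> q2 \<and> stable_eq (fitness D' sel') V' q1 \<and> stable_eq (fitness D' sel') V' q2))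
     \<comment> \<open>(3) competitive exclusion\<close>
     \<and> (\<forall>q. stable_eq (fitness D sel) V q \<longrightarrow> card (pop_supp q) = 1)
     \<comment> \<open>(4) coexistence equilibria may exist\<close>
     \<and> (\<exists>(D' :: bool \<Rightarrow> (real \<times> bool) measure) (H' :: (real \<Rightarrow> bool) set)
          (sel' :: real ^ bool \<Rightarrow> (real \<Rightarrow> bool)) (V' :: real ^ bool \<Rightarrow> real ^ bool).
          oracle_game D' H' sel' \<and> admissible_dynamics (fitness D' sel') V' \<and>
          (\<exists>q. nash_eq (fitness D' sel') q \<and> card (pop_supp q) \<ge> 2))
     \<comment> \<open>(4) ... but they are unstable\<close>
     \<and> (\<forall>q. nash_eq (fitness D sel) q \<and> card (pop_supp q) \<ge> 2 \<longrightarrow> \<not> stable_eq (fitness D sel) V q)"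
proof -
  interpret exclusive_self_optimal_game "fitness D sel" V
    by (rule oracle_game_exclusive[OF game dyn])
  have accuracy: "\<forall>x. dyn_solution V x \<longrightarrow> mono_on {0..} (\<lambda>t. mix_acc D (x t) (sel (x t)))"
    using mean_fitness_mono by (simp add: mix_acc_fitness mean_fitness_def)
  have exclusion: "\<forall>q. stable_eq (fitness D sel) V q \<longrightarrow> card (pop_supp q) = 1"
    using stable_eq_single_support by blast
  have unstable: "\<forall>q. nash_eq (fitness D sel) q \<and> 2 \<le> card (pop_supp q) \<longrightarrow> \<not> stable_eq (fitness D sel) V q"
    using coexistence_eq_not_stable by blast
  show ?thesis
    using accuracy stable_eq_exists exclusion unstable two_groups_oracle_game two_groups_admissible
      two_groups_multiple_stable two_groups_coexistence
    by (intro conjI exI[of _ two_groups] exI[of _ circle_class] exI[of _ circle_oracle]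
        exI[of _ gap_velocity]) blast+
qed

end
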